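(* Let $p$ be a probability rule for quantum many-worlds theory satisfying Axioms (A1)–(A3). Let $v=\sum_{n=0}^{N-1}\sqrt{m_n/M}\,\lvert n\rangle$, where $m_0,\dots,m_{N-1}$ and $M$ are positive integers with $\sum_{n=0}^{N-1}m_n=M$, so that $v$ is an allowed state. Then $p_n(v)=m_n/M$ for $0\le n<N$, and $p_n(v)=0$ for $n\ge N$.
   Context: Quantum many-worlds theory is defined as follows. The worlds are the vectors $\lvert n\rangle$, $n\in\{0,1,2,\dots\}$, of a countably infinite orthonormal basis of a complex Hilbert space. The allowed states are the vectors $v=\sum_n v_n\lvert n\rangle$ with $\sum_n|v_n|^2=1$, where $v_n=\langle n\vert v\rangle$ is the amplitude of world $n$. The allowed transformations are all unitary operators $T$, with matrix elements $T_{ij}=\langle i\rvert T\lvert j\rangle$. A probability rule assigns to each allowed state $v$ a sequence $(p_n(v))_{n\ge 0}$ of nonnegative reals with $\sum_n p_n(v)=1$. The axioms are: (A1) Present state dependence: $p_n$ depends only on the present state $v$, so $p$ is a function of the state alone. (A2) Weak connection with amplitudes: for every allowed state $v$, $v_n=0$ implies $p_n(v)=0$. (A3) Weak connection with transformations: for every allowed state $v$ and allowed transformation $T$, and every partition of $\{0,1,2,\dots\}$ into subsets $\mathcal S_k$ such that $T_{ij}=0$ whenever $i$ and $j$ lie in different subsets, we have $\sum_{n\in\mathcal S_k}p_n(v)=\sum_{n\in\mathcal S_k}p_n(Tv)$ for every $k$. *)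

theory Defs
  imports "HOL-Analysis.Analysis" "HOL-Library.Disjoint_Sets"
begin

text \<open>Vectors of the Hilbert space l2(N) are represented by their amplitude sequences
  v :: nat => complex, where v n is the amplitude of world |n>.\<close>

definition l2 :: "(nat \<Rightarrow> complex) set" where
  "l2 = {v. summable (\<lambda>n. (cmod (v n))^2)}"

definition sqnorm :: "(nat \<Rightarrow> complex) \<Rightarrow> real" where
  "sqnorm v = (\<Sum>n. (cmod (v n))^2)"

definition allowed_state :: "(nat \<Rightarrow> complex) \<Rightarrow> bool" where
  "allowed_state v \<longleftrightarrow> v \<in> l2 \<and> sqnorm v = 1"

definition ket :: "nat \<Rightarrow> (nat \<Rightarrow> complex)" where
  "ket n = (\<lambda>k. if k = n then 1 else 0)"

text \<open>Unitary operators on l2: linear, norm preserving, surjective maps l2 -> l2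
  (values outside l2 are irrelevant).\<close>
definition unitary_op :: "((nat \<Rightarrow> complex) \<Rightarrow> (nat \<Rightarrow> complex)) \<Rightarrow> bool" where
  "unitary_op T \<longleftrightarrow>
     (\<forall>v\<in>l2. T v \<in> l2) \<and>
     (\<forall>v\<in>l2. \<forall>w\<in>l2. \<forall>a::complex. T (\<lambda>n. a * v n + w n) = (\<lambda>n. a * T v n + T w n)) \<and>
     (\<forall>v\<in>l2. sqnorm (T v) = sqnorm v) \<and>
     (\<forall>w\<in>l2. \<exists>v\<in>l2. T v = w)"

definition mat_el :: "((nat \<Rightarrow> complex) \<Rightarrow> (nat \<Rightarrow> complex)) \<Rightarrow> nat \<Rightarrow> nat \<Rightarrow> complex" where
  "mat_el T i j = T (ket j) i"

text \<open>A probability rule (A1 is built in: p is a function of the present state alone).\<close>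
definition prob_assignment :: "((nat \<Rightarrow> complex) \<Rightarrow> nat \<Rightarrow> real) \<Rightarrow> bool" where
  "prob_assignment p \<longleftrightarrow>
     (\<forall>v. allowed_state v \<longrightarrow> (\<forall>n. p v n \<ge> 0) \<and> p v sums 1)"

definition axiom_A2 :: "((nat \<Rightarrow> complex) \<Rightarrow> nat \<Rightarrow> real) \<Rightarrow> bool" where
  "axiom_A2 p \<longleftrightarrow> (\<forall>v n. allowed_state v \<longrightarrow> v n = 0 \<longrightarrow> p v n = 0)"

definition axiom_A3 :: "((nat \<Rightarrow> complex) \<Rightarrow> nat \<Rightarrow> real) \<Rightarrow> bool" where
  "axiom_A3 p \<longleftrightarrow>
     (\<forall>v T P. allowed_state v \<longrightarrow> unitary_op T \<longrightarrow> partition_on UNIV P \<longrightarrow>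
        (\<forall>A\<in>P. \<forall>i j. i \<in> A \<longrightarrow> j \<notin> A \<longrightarrow> mat_el T i j = 0) \<longrightarrow>
        (\<forall>A\<in>P. (\<Sum>\<^sub>\<infinity>n\<in>A. p v n) = (\<Sum>\<^sub>\<infinity>n\<in>A. p (T v) n)))"

end

theory Submission imports Defs begin

text \<open>A rotation in the plane spanned by two worlds a and b is unitary and has block-diagonal
  matrix with blocks {a, b} and {l} for the other worlds, so by (A3) it conserves the total
  probability of {a, b} and every other single probability. Rotating an amplitude
  sqrt(r/M) at a against an empty world b splits it into sqrt((r-1)/M) and sqrt(1/M); iterating
  (by induction on M minus the size of the support) reduces every state with rational squared
  amplitudes m/M to the state with M equal amplitudes sqrt(1/M). There, three swaps routed
  through an empty world and (A2) show that any two of the equal worlds have the same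
  probability, hence each has probability 1/M.\<close>

definition givens :: "nat \<Rightarrow> nat \<Rightarrow> real \<Rightarrow> real \<Rightarrow> (nat \<Rightarrow> complex) \<Rightarrow> (nat \<Rightarrow> complex)" where
  "givens a b c s v = (\<lambda>n. if n = a then of_real c * v a - of_real s * v b
     else if n = b then of_real s * v a + of_real c * v b else v n)"

lemma cmod_givens_pair:
  fixes x y :: complex
  assumes "c\<^sup>2 + s\<^sup>2 = 1"
  shows "(cmod (of_real c * x - of_real s * y))\<^sup>2 + (cmod (of_real s * x + of_real c * y))\<^sup>2
       = (cmod x)\<^sup>2 + (cmod y)\<^sup>2"
proof -
  obtain x1 x2 y1 y2 where xy: "x = Complex x1 x2" "y = Complex y1 y2"
    by (cases x, cases y) auto
  have "(cmod (of_real c * x - of_real s * y))\<^sup>2 + (cmod (of_real s * x + of_real c * y))\<^sup>2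
       = (c\<^sup>2 + s\<^sup>2) * ((cmod x)\<^sup>2 + (cmod y)\<^sup>2)"
    unfolding cmod_power2 xy by (simp add: power2_eq_square algebra_simps)
  then show ?thesis using assms by simp
qed

lemma givens_l2:
  assumes "v \<in> l2"
  shows "givens a b c s v \<in> l2"
proof -
  have "eventually (\<lambda>n. (cmod (givens a b c s v n))\<^sup>2 = (cmod (v n))\<^sup>2) sequentially"
    using eventually_gt_at_top[of "max a b"] by eventually_elim (auto simp: givens_def)
  then show ?thesis
    using assms unfolding l2_def by (simp only: mem_Collect_eq summable_cong)
qed

lemma sqnorm_givens:
  assumes "v \<in> l2" and "a \<noteq> b" and "c\<^sup>2 + s\<^sup>2 = 1"
  shows "sqnorm (givens a b c s v) = sqnorm v"
proof -
  define f where "f = (\<lambda>n. (cmod (givens a b c s v n))\<^sup>2)"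
  define g where "g = (\<lambda>n. (cmod (v n))\<^sup>2)"
  have "summable g" using assms(1) by (simp add: l2_def g_def)
  have "(\<lambda>n. f n - g n) sums (\<Sum>n\<in>{a, b}. f n - g n)"
    by (rule sums_finite) (auto simp: f_def g_def givens_def)
  moreover have "(\<Sum>n\<in>{a, b}. f n - g n) = 0"
    using assms(2) cmod_givens_pair[OF assms(3), of "v a" "v b"]
    by (simp add: f_def g_def givens_def)
  ultimately have "(\<lambda>n. g n + (f n - g n)) sums (suminf g + 0)"
    using \<open>summable g\<close> by (intro sums_add summable_sums) auto
  then have "f sums suminf g" by simp
  then show ?thesis by (simp add: sqnorm_def f_def g_def sums_iff)
qed

lemma givens_givens_neg:
  assumes "a \<noteq> b" and "c\<^sup>2 + s\<^sup>2 = 1"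
  shows "givens a b c s (givens a b c (- s) w) = w"
proof
  fix n
  have cs: "(of_real c * of_real c + of_real s * of_real s :: complex) = 1"
    using arg_cong[OF assms(2), of complex_of_real] by (simp add: power2_eq_square)
  have "of_real c * (of_real c * w a - of_real (- s) * w b)
      - of_real s * (of_real (- s) * w a + of_real c * w b)
      = (of_real c * of_real c + of_real s * of_real s :: complex) * w a"
    and "of_real s * (of_real c * w a - of_real (- s) * w b)
      + of_real c * (of_real (- s) * w a + of_real c * w b)
      = (of_real c * of_real c + of_real s * of_real s :: complex) * w b"
    by (simp_all add: algebra_simps)
  then show "givens a b c s (givens a b c (- s) w) n = w n"
    using assms(1) unfolding cs by (simp add: givens_def)
qed

lemma unitary_op_givens:
  assumes "a \<noteq> b" and "c\<^sup>2 + s\<^sup>2 = 1"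
  shows "unitary_op (givens a b c s)"
  unfolding unitary_op_def
proof (intro conjI ballI allI)
  fix v w :: "nat \<Rightarrow> complex" and x :: complex
  show "givens a b c s (\<lambda>n. x * v n + w n) = (\<lambda>n. x * givens a b c s v n + givens a b c s w n)"
    by (auto simp: givens_def algebra_simps)
next
  fix w :: "nat \<Rightarrow> complex"
  assume "w \<in> l2"
  then show "\<exists>v\<in>l2. givens a b c s v = w"
    using givens_l2 givens_givens_neg[OF assms] by blast
qed (use givens_l2 sqnorm_givens assms in blast)+

lemma allowed_state_givens:
  assumes "allowed_state v" and "a \<noteq> b" and "c\<^sup>2 + s\<^sup>2 = 1"
  shows "allowed_state (givens a b c s v)"
  using assms givens_l2 sqnorm_givens unfolding allowed_state_def by metis

lemma axiom_A3_two_level: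
  assumes "axiom_A3 p" and "allowed_state v" and "unitary_op T"
    and block: "\<And>i j. i \<noteq> j \<Longrightarrow> \<not> (i \<in> {a, b} \<and> j \<in> {a, b}) \<Longrightarrow> mat_el T i j = 0"
  shows "a \<noteq> b \<Longrightarrow> p v a + p v b = p (T v) a + p (T v) b"
    and "l \<notin> {a, b} \<Longrightarrow> p (T v) l = p v l"
proof -
  define P where "P = insert {a, b} ((\<lambda>l. {l}) ` (- {a, b}))"
  have "partition_on UNIV P"
    unfolding partition_on_def disjoint_def P_def by auto
  moreover have "\<forall>A\<in>P. \<forall>i j. i \<in> A \<longrightarrow> j \<notin> A \<longrightarrow> mat_el T i j = 0"
    unfolding P_def using block by auto
  ultimately have conserved: "(\<Sum>\<^sub>\<infinity>n\<in>A. p v n) = (\<Sum>\<^sub>\<infinity>n\<in>A. p (T v) n)" if "A \<in> P" for A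
    using assms(1-3) that unfolding axiom_A3_def by blast
  show "p v a + p v b = p (T v) a + p (T v) b" if "a \<noteq> b"
    using conserved[of "{a, b}"] that by (simp add: P_def)
  show "p (T v) l = p v l" if "l \<notin> {a, b}"
    using conserved[of "{l}"] that by (simp add: P_def)
qed

lemma
  assumes "axiom_A3 p" and "allowed_state v" and "a \<noteq> b" and "c\<^sup>2 + s\<^sup>2 = 1"
  shows axiom_A3_givens_pair: "p v a + p v b = p (givens a b c s v) a + p (givens a b c s v) b"
    and axiom_A3_givens_other: "l \<notin> {a, b} \<Longrightarrow> p (givens a b c s v) l = p v l"
proof -
  have block: "mat_el (givens a b c s) i j = 0" if "i \<noteq> j" and "\<not> (i \<in> {a, b} \<and> j \<in> {a, b})" for i j
    using that by (auto simp: mat_el_def givens_def ket_def)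
  note two_level = axiom_A3_two_level[OF assms(1,2) unitary_op_givens[OF assms(3,4)]]
  show "p v a + p v b = p (givens a b c s v) a + p (givens a b c s v) b"
    using two_level(1)[of a b] block assms(3) by blast
  show "l \<notin> {a, b} \<Longrightarrow> p (givens a b c s v) l = p v l"
    using two_level(2)[of a b] block by blast
qed

text \<open>Three rotations by a right angle (c = 0, s = 1) cyclically move the amplitudes of i, j
  and the empty world k; the composite maps v back to itself and exchanges the probabilities of
  i and j, because each intermediate state has a zero amplitude where (A2) pins the probability
  to zero.\<close>

lemma prob_eq_if_amplitude_eq:
  assumes A2: "axiom_A2 p" and A3: "axiom_A3 p" and v: "allowed_state v"
    and distinct: "i \<noteq> j" "i \<noteq> k" "j \<noteq> k" and "v i = v j" and "v k = 0"
  shows "p v i = p v j"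
proof -
  have cs: "(0::real)\<^sup>2 + 1\<^sup>2 = 1" by simp
  define w1 where "w1 = givens i k 0 1 v"
  define w2 where "w2 = givens j i 0 1 w1"
  define w3 where "w3 = givens k j 0 1 w2"
  have w1: "allowed_state w1" unfolding w1_def using allowed_state_givens[OF v _ cs] distinct by auto
  have w2: "allowed_state w2" unfolding w2_def using allowed_state_givens[OF w1 _ cs] distinct by auto
  have "w3 = v"
    using distinct assms(7,8) by (auto simp: w3_def w2_def w1_def givens_def)
  have zeros: "p v k = 0" "p w1 i = 0" "p w2 j = 0" "p w3 k = 0"
    using A2 v w1 w2 assms(8) distinct \<open>w3 = v\<close> unfolding axiom_A2_def
    by (auto simp: w1_def w2_def givens_def)
  have "p v i + p v k = p w1 i + p w1 k" "p w1 j = p v j"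
    using axiom_A3_givens_pair[OF A3 v _ cs] axiom_A3_givens_other[OF A3 v _ cs] distinct
    by (auto simp: w1_def)
  moreover have "p w1 j + p w1 i = p w2 j + p w2 i" "p w2 k = p w1 k"
    using axiom_A3_givens_pair[OF A3 w1 _ cs] axiom_A3_givens_other[OF A3 w1 _ cs] distinct
    by (auto simp: w2_def)
  moreover have "p w2 k + p w2 j = p w3 k + p w3 j" "p w3 i = p w2 i"
    using axiom_A3_givens_pair[OF A3 w2 _ cs] axiom_A3_givens_other[OF A3 w2 _ cs] distinct
    by (auto simp: w3_def)
  ultimately have "p w3 i = p v j" using zeros by linarith
  then show ?thesis using \<open>w3 = v\<close> by simp
qed

definition frequency_state :: "nat \<Rightarrow> (nat \<Rightarrow> nat) \<Rightarrow> nat \<Rightarrow> complex" where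
  "frequency_state M r = (\<lambda>k. of_real (sqrt (real (r k) / real M)))"

lemma allowed_state_frequency_state:
  assumes "finite F" and "\<And>k. k \<notin> F \<Longrightarrow> r k = 0" and "sum r F = M" and "M > 0"
  shows "allowed_state (frequency_state M r)"
proof -
  have "(cmod (frequency_state M r k))\<^sup>2 = real (r k) / real M" for k
    by (simp add: frequency_state_def)
  then have "(\<lambda>k. (cmod (frequency_state M r k))\<^sup>2) sums (\<Sum>k\<in>F. real (r k) / real M)"
    using sums_finite[OF assms(1), of "\<lambda>k. real (r k) / real M"] assms(2) by simp
  moreover have "(\<Sum>k\<in>F. real (r k) / real M) = 1"
    using assms(3,4) by (simp flip: sum_divide_distrib of_nat_sum)
  ultimately show ?thesis
    unfolding allowed_state_def l2_def sqnorm_def by (auto simp: sums_iff)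
qed

lemma givens_frequency_state:
  assumes "a \<noteq> b" and "r a > 0" and "r b = 0"
  defines "c \<equiv> sqrt ((real (r a) - 1) / real (r a))" and "s \<equiv> sqrt (1 / real (r a))"
  shows "c\<^sup>2 + s\<^sup>2 = 1"
    and "givens a b c s (frequency_state M r) = frequency_state M (r(a := r a - 1, b := 1))"
proof -
  show "c\<^sup>2 + s\<^sup>2 = 1" using assms(2) by (simp add: c_def s_def field_simps)
  have "c * sqrt (real (r a) / real M) = sqrt ((real (r a) - 1) / real M)"
    and "s * sqrt (real (r a) / real M) = sqrt (1 / real M)"
    using assms(2) by (simp_all add: c_def s_def flip: real_sqrt_mult)
  then show "givens a b c s (frequency_state M r) = frequency_state M (r(a := r a - 1, b := 1))"
    using assms(1-3)
    by (auto simp: givens_def frequency_state_def simp flip: of_real_mult)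
qed

lemma prob_frequency_state_split:
  fixes r :: "nat \<Rightarrow> nat"
  assumes A2: "axiom_A2 p" and A3: "axiom_A3 p" and v: "allowed_state (frequency_state M r)"
    and "a \<noteq> b" and "r a \<ge> 2" and "r b = 0"
    and split: "\<And>l. p (frequency_state M (r(a := r a - 1, b := 1))) l
                  = real ((r(a := r a - 1, b := 1)) l) / real M"
  shows "p (frequency_state M r) k = real (r k) / real M"
proof -
  define c where "c = sqrt ((real (r a) - 1) / real (r a))"
  define s where "s = sqrt (1 / real (r a))"
  have cs: "c\<^sup>2 + s\<^sup>2 = 1"
    and rotated: "givens a b c s (frequency_state M r) = frequency_state M (r(a := r a - 1, b := 1))"
    using givens_frequency_state[OF \<open>a \<noteq> b\<close>, of r] assms(5,6) by (auto simp: c_def s_def)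
  have pb: "p (frequency_state M r) b = 0"
    using A2 v \<open>r b = 0\<close> unfolding axiom_A2_def by (simp add: frequency_state_def)
  have "p (frequency_state M r) a + p (frequency_state M r) b
      = real (r a - 1) / real M + 1 / real M"
    using axiom_A3_givens_pair[OF A3 v \<open>a \<noteq> b\<close> cs] split[of a] split[of b] \<open>a \<noteq> b\<close>
    unfolding rotated by simp
  then have "p (frequency_state M r) a = real (r a) / real M"
    using pb assms(5) by (simp add: add_divide_distrib[symmetric])
  moreover have "p (frequency_state M r) l = real (r l) / real M" if "l \<notin> {a, b}" for l
    using axiom_A3_givens_other[OF A3 v \<open>a \<noteq> b\<close> cs that] split[of l] that
    unfolding rotated by simp
  ultimately show ?thesis using pb \<open>r b = 0\<close> by (cases "k \<in> {a, b}") auto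
qed

lemma prob_frequency_state_unit_counts:
  assumes P: "prob_assignment p" and A2: "axiom_A2 p" and A3: "axiom_A3 p"
    and "finite F" and "\<And>k. k \<in> F \<Longrightarrow> r k = 1" and "\<And>k. k \<notin> F \<Longrightarrow> r k = 0"
    and "card F = M" and "M > 0"
  shows "p (frequency_state M r) k = real (r k) / real M"
proof -
  let ?v = "frequency_state M r"
  have "sum r F = M" using assms(5,7) by simp
  then have v: "allowed_state ?v"
    using allowed_state_frequency_state assms(4,6,8) by blast
  have outside: "p ?v k = 0" if "k \<notin> F" for k
    using A2 v that assms(6) unfolding axiom_A2_def by (simp add: frequency_state_def)
  obtain e where "e \<notin> F" using \<open>finite F\<close> ex_new_if_finite[OF infinite_UNIV_nat] by blast
  have equal: "p ?v i = p ?v j" if "i \<in> F" "j \<in> F" for i j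
  proof (cases "i = j")
    case False
    show ?thesis
    proof (rule prob_eq_if_amplitude_eq[OF A2 A3 v False])
      show "i \<noteq> e" "j \<noteq> e" using that \<open>e \<notin> F\<close> by auto
      show "?v i = ?v j" "?v e = 0"
        using that \<open>e \<notin> F\<close> assms(5,6) by (simp_all add: frequency_state_def)
    qed
  qed simp
  have "p ?v sums 1" using P v unfolding prob_assignment_def by blast
  moreover have "p ?v sums sum (p ?v) F" by (rule sums_finite[OF \<open>finite F\<close> outside])
  ultimately have "sum (p ?v) F = 1" using sums_unique2 by blast
  show ?thesis
  proof (cases "k \<in> F")
    case True
    have "sum (p ?v) F = real M * p ?v k"
      using equal[OF _ True] assms(7) by simp
    then show ?thesis
      using \<open>sum (p ?v) F = 1\<close> assms(5,8) True by (simp add: field_simps)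
  qed (use outside assms(6) in simp)
qed

lemma sum_move_unit:
  fixes r :: "'a \<Rightarrow> nat"
  assumes "finite F" and "a \<in> F" and "b \<notin> F" and "r a \<ge> 1"
  shows "sum (r(a := r a - 1, b := 1)) (insert b F) = sum r F"
proof -
  have "sum (r(a := r a - 1, b := 1)) (F - {a}) = sum r (F - {a})"
    using assms(3) by (intro sum.cong) auto
  moreover have "a \<noteq> b" using assms(2,3) by blast
  ultimately show ?thesis
    using assms by (simp add: sum.remove[of F a])
qed

lemma prob_frequency_state:
  assumes P: "prob_assignment p" and A2: "axiom_A2 p" and A3: "axiom_A3 p" and "M > 0"
    and "finite {k. r k \<noteq> 0}" and "sum r {k. r k \<noteq> 0} = M"
  shows "p (frequency_state M r) k = real (r k) / real M"
  using assms(5,6)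
proof (induction "M - card {k. r k \<noteq> 0}" arbitrary: r k rule: less_induct)
  case less
  define F where "F = {k. r k \<noteq> 0}"
  have "finite F" and "sum r F = M" using less.prems by (simp_all add: F_def)
  have v: "allowed_state (frequency_state M r)"
    using allowed_state_frequency_state[OF \<open>finite F\<close> _ \<open>sum r F = M\<close> \<open>M > 0\<close>]
    by (simp add: F_def)
  show ?case
  proof (cases "\<exists>a. r a \<ge> 2")
    case True
    then obtain a where "r a \<ge> 2" by blast
    obtain b where "b \<notin> F" using \<open>finite F\<close> ex_new_if_finite[OF infinite_UNIV_nat] by blast
    then have "a \<noteq> b" "r b = 0" "a \<in> F" using \<open>r a \<ge> 2\<close> by (auto simp: F_def)
    define r' where "r' = r(a := r a - 1, b := 1)"
    have support': "{k. r' k \<noteq> 0} = insert b F"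
      using \<open>r a \<ge> 2\<close> \<open>a \<noteq> b\<close> by (auto simp: r'_def F_def)
    have sum': "sum r' {k. r' k \<noteq> 0} = M"
      unfolding support' unfolding r'_def
      using sum_move_unit[OF \<open>finite F\<close> \<open>a \<in> F\<close> \<open>b \<notin> F\<close>, of r] \<open>r a \<ge> 2\<close> \<open>sum r F = M\<close>
      by simp
    have "card F + 1 \<le> sum r F"
    proof -
      have "card F = (\<Sum>k\<in>F. 1)" by simp
      also have "\<dots> < sum r F"
        using \<open>finite F\<close> \<open>a \<in> F\<close> \<open>r a \<ge> 2\<close>
        by (intro sum_strict_mono_ex1) (auto simp: F_def intro!: exI[of _ a])
      finally show ?thesis by simp
    qed
    then have "M - card {k. r' k \<noteq> 0} < M - card {k. r k \<noteq> 0}"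
      unfolding support' F_def[symmetric] using \<open>finite F\<close> \<open>b \<notin> F\<close> \<open>sum r F = M\<close> by simp
    then have "p (frequency_state M r') l = real (r' l) / real M" for l
      using less.hyps support' \<open>finite F\<close> sum' by simp
    then show ?thesis
      using prob_frequency_state_split[OF A2 A3 v \<open>a \<noteq> b\<close> \<open>r a \<ge> 2\<close> \<open>r b = 0\<close>]
      by (simp add: r'_def)
  next
    case False
    then have unit: "r k = 1" if "k \<in> F" for k
      using that by (auto simp: F_def not_le) (metis less_2_cases not_gr0)
    then have "card F = M" using \<open>sum r F = M\<close> by simp
    show ?thesis
      by (rule prob_frequency_state_unit_counts[OF P A2 A3 \<open>finite F\<close> unit _ \<open>card F = M\<close> \<open>M > 0\<close>])
        (auto simp: F_def)
  qed
qed

theorem theorem1: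
  fixes p :: "(nat \<Rightarrow> complex) \<Rightarrow> nat \<Rightarrow> real"
    and N M :: nat and m :: "nat \<Rightarrow> nat"
  assumes "prob_assignment p" and "axiom_A2 p" and "axiom_A3 p"
    and "\<forall>n<N. m n > 0" and "M > 0" and "(\<Sum>n<N. m n) = M"
  shows "let v = (\<lambda>n. if n < N then complex_of_real (sqrt (real (m n) / real M)) else 0) in
           (\<forall>n<N. p v n = real (m n) / real M) \<and> (\<forall>n\<ge>N. p v n = 0)"
proof -
  define r where "r n = (if n < N then m n else 0)" for n
  have support: "{k. r k \<noteq> 0} = {..<N}" using assms(4) by (auto simp: r_def)
  have "(\<lambda>n. if n < N then complex_of_real (sqrt (real (m n) / real M)) else 0)
      = frequency_state M r"
    by (auto simp: frequency_state_def r_def)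
  moreover have "p (frequency_state M r) k = real (r k) / real M" for k
    using prob_frequency_state[OF assms(1-3,5)] support assms(6) by (simp add: r_def)
  ultimately show ?thesis by (simp add: r_def)
qed

end
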